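(* Let $\gamma>0$, $\mu\ge0$, and $$q_\mu(r,t)=\int_0^\infty p(r,s)\,p_\mu(s,t)\,ds,\qquad p(r,s)=\frac{2r^{\gamma-1}e^{-r^2/(2s)}}{(2s)^{\gamma/2}\Gamma(\gamma/2)},\quad p_\mu(s,t)=\frac{t\,e^{-(t-\mu s)^2/(2s)}}{\sqrt{2\pi s^3}},$$ which is the density of $R^\gamma(T^\mu_t)$ ($R^\gamma$ a $\gamma$-dimensional Bessel process from $0$, $T^\mu_t$ the first passage time to level $t$ of an independent Brownian motion with drift $\mu$). Then $$\left(2\mu\frac{\partial}{\partial t}-\frac{\partial^2}{\partial t^2}\right)q_\mu=\left(\frac{\partial^2}{\partial r^2}-(\gamma-1)\frac{\partial}{\partial r}\frac1r\right)q_\mu,\qquad r,t>0.$$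
   Context: The operator $\frac{\partial}{\partial r}\frac1r$ means $f\mapsto\frac{\partial}{\partial r}\left(\frac fr\right)$. *)

theory Defs
  imports "HOL-Analysis.Analysis"
begin

text \<open>Density of a gamma-dimensional Bessel process started at 0, at time s, evaluated at r.\<close>
definition bessel_p :: "real \<Rightarrow> real \<Rightarrow> real \<Rightarrow> real" where
  "bessel_p \<gamma> r s = 2 * r powr (\<gamma> - 1) * exp (- (r\<^sup>2) / (2 * s))
      / ((2 * s) powr (\<gamma> / 2) * Gamma (\<gamma> / 2))"

text \<open>Density at s of the first passage time to level t of Brownian motion with drift mu.\<close>
definition passage_p :: "real \<Rightarrow> real \<Rightarrow> real \<Rightarrow> real" where
  "passage_p \<mu> s t = t * exp (- ((t - \<mu> * s)\<^sup>2) / (2 * s)) / sqrt (2 * pi * s ^ 3)"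

definition q_mu :: "real \<Rightarrow> real \<Rightarrow> real \<Rightarrow> real \<Rightarrow> real" where
  "q_mu \<gamma> \<mu> r t = (LBINT s:{0<..}. bessel_p \<gamma> r s * passage_p \<mu> s t)"

end

theory Submission
  imports Defs "HOL-Real_Asymp.Real_Asymp"
begin

(* Completing the square in the exponent factorises the density as
     q_mu(r, t) = C r^(gamma-1) t e^(mu t) H(r^2 + t^2),
   where H = H_a with a = (gamma+3)/2 and H_k(rho) = int_0^oo s^(-k) exp(-rho/(2s) - mu^2 s/2) ds.
   Differentiating under the integral sign raises the index, H_k' = -H_(k+1)/2, and integrating
   the s-derivative of the integrand over (0, oo) gives the recurrence
   rho H_(a+2) = 2a H_(a+1) + mu^2 H_a, i.e. the ODE 4 rho H'' + 2(gamma+3) H' = mu^2 H.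
   For any function C x^(gamma-1) t e^(mu t) H(x^2 + t^2), the two sides of the equation are
   C r^(gamma-1) t e^(mu t) times mu^2 H - 6H' - 4t^2 H'' and 2 gamma H' + 4r^2 H'' respectively,
   and these agree precisely by that ODE. *)

lemma tendsto_set_integral_difference_quotient:
  fixes f f' :: "real \<Rightarrow> real \<Rightarrow> real" and g :: "real \<Rightarrow> real" and h :: "nat \<Rightarrow> real"
    and S :: "real set"
  assumes "d > 0"
    and integrable: "\<And>x. x \<in> ball x0 d \<Longrightarrow> set_integrable lborel S (f x)"
    and derivative: "\<And>x s. x \<in> ball x0 d \<Longrightarrow> s \<in> S \<Longrightarrow>
      ((\<lambda>x. f x s) has_real_derivative f' x s) (at x)"
    and dominating: "set_integrable lborel S g"
    and bound: "\<And>x s. x \<in> ball x0 d \<Longrightarrow> s \<in> S \<Longrightarrow> \<bar>f' x s\<bar> \<le> g s"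
    and "set_integrable lborel S (f' x0)"
    and h: "h \<longlonglongrightarrow> 0" and h_ne: "\<And>n. h n \<noteq> 0"
    and h_ball: "\<And>n. x0 + h n \<in> ball x0 d"
  shows "(\<lambda>n. ((LBINT s:S. f (x0 + h n) s) - (LBINT s:S. f x0 s)) / h n)
      \<longlonglongrightarrow> (LBINT s:S. f' x0 s)"
proof -
  have lipschitz: "norm (f y s - f x0 s) \<le> g s * norm (y - x0)" if "y \<in> ball x0 d" "s \<in> S" for y s
  proof (rule field_differentiable_bound[where S = "ball x0 d" and f = "\<lambda>x. f x s" and f' = "\<lambda>x. f' x s"])
    show "((\<lambda>x. f x s) has_field_derivative f' z s) (at z within ball x0 d)" if "z \<in> ball x0 d" for z
      using derivative[OF that \<open>s \<in> S\<close>] by (rule has_field_derivative_at_within)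
    show "norm (f' z s) \<le> g s" if "z \<in> ball x0 d" for z
      using bound[OF that \<open>s \<in> S\<close>] by simp
  qed (use that \<open>d > 0\<close> in simp_all)
  define Q where "Q n s = indicator S s * ((f (x0 + h n) s - f x0 s) / h n)" for n s
  have Q_integral: "integral\<^sup>L lborel (Q n) = ((LBINT s:S. f (x0 + h n) s) - (LBINT s:S. f x0 s)) / h n" for n
  proof -
    have "set_integrable lborel S (f (x0 + h n))" and "set_integrable lborel S (f x0)"
      using integrable h_ball \<open>d > 0\<close> by auto
    from set_integral_diff(2)[OF this]
    have "(LBINT s:S. (f (x0 + h n) s - f x0 s) / h n)
        = ((LBINT s:S. f (x0 + h n) s) - (LBINT s:S. f x0 s)) / h n"
      by simp
    then show ?thesis
      unfolding Q_def set_lebesgue_integral_def by simp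
  qed
  have "(\<lambda>n. integral\<^sup>L lborel (Q n)) \<longlonglongrightarrow> (LBINT s:S. f' x0 s)"
    unfolding set_lebesgue_integral_def
  proof (rule integral_dominated_convergence[where w = "\<lambda>s. indicator S s * g s"])
    show "(\<lambda>s. indicat_real S s *\<^sub>R f' x0 s) \<in> borel_measurable lborel"
      using \<open>set_integrable lborel S (f' x0)\<close> unfolding set_integrable_def by simp
    show "Q n \<in> borel_measurable lborel" for n
    proof -
      have "set_integrable lborel S (\<lambda>s. (f (x0 + h n) s - f x0 s) / h n)"
        using integrable h_ball \<open>d > 0\<close> by (intro set_integrable_divide set_integral_diff(1)) auto
      then show ?thesis unfolding set_integrable_def Q_def by simp
    qed
    show "integrable lborel (\<lambda>s. indicator S s * g s)"
      using dominating unfolding set_integrable_def by simp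
    show "AE s in lborel. (\<lambda>n. Q n s) \<longlonglongrightarrow> indicat_real S s *\<^sub>R f' x0 s"
    proof (rule AE_I2)
      fix s
      show "(\<lambda>n. Q n s) \<longlonglongrightarrow> indicat_real S s *\<^sub>R f' x0 s"
      proof (cases "s \<in> S")
        case True
        have "((\<lambda>y. (f (x0 + y) s - f x0 s) / y) \<longlongrightarrow> f' x0 s) (at 0)"
          using derivative[of x0 s] True \<open>d > 0\<close> unfolding DERIV_def by simp
        from this[unfolded tendsto_at_iff_sequentially, rule_format, of h]
        have "(\<lambda>n. (f (x0 + h n) s - f x0 s) / h n) \<longlonglongrightarrow> f' x0 s"
          using h h_ne by (simp add: comp_def)
        then show ?thesis using True unfolding Q_def by simp
      qed (simp add: Q_def)
    qed
    show "AE s in lborel. norm (Q n s) \<le> indicator S s * g s" for n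
    proof (rule AE_I2)
      fix s
      show "norm (Q n s) \<le> indicator S s * g s"
        using lipschitz[OF h_ball, of s] h_ne[of n]
        by (cases "s \<in> S") (simp_all add: Q_def abs_divide divide_le_eq)
    qed
  qed
  then show ?thesis by (simp add: Q_integral)
qed

lemma has_real_derivative_set_integral:
  fixes f f' :: "real \<Rightarrow> real \<Rightarrow> real" and g :: "real \<Rightarrow> real" and S :: "real set"
  assumes "d > 0"
    and "\<And>x. x \<in> ball x0 d \<Longrightarrow> set_integrable lborel S (f x)"
    and "\<And>x s. x \<in> ball x0 d \<Longrightarrow> s \<in> S \<Longrightarrow>
      ((\<lambda>x. f x s) has_real_derivative f' x s) (at x)"
    and "set_integrable lborel S g"
    and "\<And>x s. x \<in> ball x0 d \<Longrightarrow> s \<in> S \<Longrightarrow> \<bar>f' x s\<bar> \<le> g s"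
    and "set_integrable lborel S (f' x0)"
  shows "((\<lambda>x. LBINT s:S. f x s) has_real_derivative (LBINT s:S. f' x0 s)) (at x0)"
  unfolding DERIV_def tendsto_at_iff_sequentially
proof (intro allI impI)
  fix X :: "nat \<Rightarrow> real"
  assume X_ne: "\<forall>i. X i \<in> UNIV - {0}" and X: "X \<longlonglongrightarrow> 0"
  from X \<open>d > 0\<close> obtain N where N: "\<And>n. n \<ge> N \<Longrightarrow> \<bar>X n\<bar> < d"
    unfolding LIMSEQ_def dist_real_def by fastforce
  have lim: "(\<lambda>n. ((LBINT s:S. f (x0 + X (n + N)) s) - (LBINT s:S. f x0 s)) / X (n + N))
      \<longlonglongrightarrow> (LBINT s:S. f' x0 s)"
  proof (rule tendsto_set_integral_difference_quotient[OF assms])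
    show "(\<lambda>n. X (n + N)) \<longlonglongrightarrow> 0"
      by (rule LIMSEQ_ignore_initial_segment[OF X])
  qed (use N X_ne in \<open>simp_all add: dist_real_def\<close>)
  show "((\<lambda>y. ((LBINT s:S. f (x0 + y) s) - (LBINT s:S. f x0 s)) / y) \<circ> X)
      \<longlonglongrightarrow> (LBINT s:S. f' x0 s)"
    by (rule LIMSEQ_offset[where k = N]) (use lim in \<open>simp add: comp_def\<close>)
qed

lemma set_integrable_one_plus_powr:
  fixes k :: real
  assumes "k > 1"
  shows "set_integrable lborel {0<..} (\<lambda>s. (1 + s) powr (-k))"
proof -
  let ?F = "\<lambda>s::real. - ((1 + s) powr (1 - k) / (k - 1))"
  have "set_integrable lborel (einterval 0 \<infinity>) (\<lambda>s. (1 + s) powr (-k))"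
  proof (rule interval_integral_FTC_nonneg(1)[where F = ?F and A = "-1/(k-1)" and B = 0])
    show "(?F has_real_derivative (1 + x) powr (-k)) (at x)" if "0 < ereal x" for x
      using that \<open>k > 1\<close>
      by (auto intro!: derivative_eq_intros) (simp add: field_simps powr_diff powr_minus)
    show "((?F \<circ> real_of_ereal) \<longlongrightarrow> -1/(k-1)) (at_right 0)"
      unfolding zero_ereal_def ereal_tendsto_simps using \<open>k > 1\<close>
      by (auto intro!: tendsto_eq_intros)
    show "((?F \<circ> real_of_ereal) \<longlongrightarrow> 0) (at_left \<infinity>)"
      unfolding ereal_tendsto_simps using \<open>k > 1\<close> by real_asymp
  qed (auto intro!: continuous_intros)
  then show ?thesis by (simp add: zero_ereal_def)
qed

lemma powr_neg_mult_exp_le: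
  fixes k c s :: real
  assumes "k > 0" "c > 0" "s > 0"
  shows "s powr (-k) * exp (-c/s) \<le> max 1 (k/c) powr k * (1 + s) powr (-k)"
proof -
  define M where "M = max 1 (k/c)"
  have "M \<ge> 1" and "M * (c/k) \<ge> 1"
    using assms by (auto simp: M_def field_simps max_def)
  have "1 + 1/s \<le> M * (1 + (c/k)/s)"
  proof -
    have "1/s \<le> M * (c/k) / s"
      using divide_right_mono[OF \<open>M * (c/k) \<ge> 1\<close>, of s] \<open>s > 0\<close> by simp
    then show ?thesis using \<open>M \<ge> 1\<close> by (simp add: algebra_simps)
  qed
  also have "\<dots> \<le> M * exp ((c/k)/s)"
    using \<open>M \<ge> 1\<close> exp_ge_add_one_self_aux[of "(c/k)/s"] assms by simp
  finally have "(1 + 1/s) powr k \<le> (M * exp ((c/k)/s)) powr k"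
    using assms by (intro powr_mono2) auto
  also have "\<dots> = M powr k * exp (c/s)"
    using \<open>M \<ge> 1\<close> \<open>k > 0\<close> by (simp add: powr_mult powr_def ln_mult field_simps exp_add)
  finally have A: "(1 + 1/s) powr k \<le> M powr k * exp (c/s)" .
  have "s powr (-k) = (1 + 1/s) powr k * (1 + s) powr (-k)"
  proof -
    have "1 + 1/s = (1 + s) / s" using \<open>s > 0\<close> by (simp add: field_simps)
    then show ?thesis using \<open>s > 0\<close> by (simp add: powr_divide powr_minus field_simps)
  qed
  then have "s powr (-k) * exp (-c/s) = (1 + 1/s) powr k * exp (-c/s) * (1 + s) powr (-k)"
    by simp
  also have "\<dots> \<le> M powr k * exp (c/s) * exp (-c/s) * (1 + s) powr (-k)"
    using A by (intro mult_right_mono) auto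
  also have "\<dots> = M powr k * (1 + s) powr (-k)"
    by (simp add: exp_minus field_simps)
  finally show ?thesis unfolding M_def .
qed

lemma set_integrable_powr_neg_mult_exp:
  fixes k c :: real
  assumes "k > 1" "c > 0"
  shows "set_integrable lborel {0<..} (\<lambda>s. s powr (-k) * exp (-c/s))"
proof (rule set_integrable_bound[OF set_integrable_mult_right[OF set_integrable_one_plus_powr[OF \<open>k > 1\<close>]]])
  show "set_borel_measurable lborel {0<..} (\<lambda>s. s powr (-k) * exp (-c/s))"
    unfolding set_borel_measurable_def by measurable
  show "AE s in lborel. s \<in> {0<..} \<longrightarrow>
      norm (s powr (-k) * exp (-c/s)) \<le> norm (max 1 (k/c) powr k * (1 + s) powr (-k))"
    using powr_neg_mult_exp_le[of k c] assms by auto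
qed

lemma powr_minus_diff:
  fixes s k j :: real
  shows "s powr (- k - j) = s powr (-k) / s powr j" and "s powr (- j - k) = s powr (-k) / s powr j"
proof -
  show "s powr (- k - j) = s powr (-k) / s powr j" by (rule powr_diff)
  moreover have "- j - k = - k - j" by simp
  ultimately show "s powr (- j - k) = s powr (-k) / s powr j" by metis
qed

(* An unnormalised generalised inverse Gaussian density; for m > 0 the integral gig_integral m k b
   is a multiple of the modified Bessel function K_(k-1)(m sqrt b). *)
definition gig_kernel :: "real \<Rightarrow> real \<Rightarrow> real \<Rightarrow> real \<Rightarrow> real" where
  "gig_kernel m k b s = s powr (-k) * exp (- (b / (2 * s)) - m\<^sup>2 * s / 2)"

definition gig_integral :: "real \<Rightarrow> real \<Rightarrow> real \<Rightarrow> real" where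
  "gig_integral m k b = (LBINT s:{0<..}. gig_kernel m k b s)"

lemma gig_kernel_abs_le:
  assumes "s > 0" "b' \<le> b"
  shows "\<bar>gig_kernel m k b s\<bar> \<le> s powr (-k) * exp (- (b' / 2) / s)"
proof -
  have "b' / (2 * s) \<le> b / (2 * s)"
    using assms by (intro divide_right_mono) auto
  moreover have "m\<^sup>2 * s / 2 \<ge> 0" using assms by simp
  ultimately have "exp (- (b / (2 * s)) - m\<^sup>2 * s / 2) \<le> exp (- (b' / 2) / s)"
    by simp
  then show ?thesis
    using assms unfolding gig_kernel_def by (simp add: abs_mult mult_left_mono)
qed

lemma set_integrable_gig_kernel:
  assumes "k > 1" "b > 0"
  shows "set_integrable lborel {0<..} (gig_kernel m k b)"
proof (rule set_integrable_bound[OF set_integrable_powr_neg_mult_exp[of k "b/2"]])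
  show "set_borel_measurable lborel {0<..} (gig_kernel m k b)"
    unfolding set_borel_measurable_def gig_kernel_def by measurable
  show "AE s in lborel. s \<in> {0<..} \<longrightarrow>
      norm (gig_kernel m k b s) \<le> norm (s powr (-k) * exp (- (b/2) / s))"
    using gig_kernel_abs_le[of _ b b m k] by auto
qed (use assms in auto)

lemma gig_kernel_has_derivative:
  assumes "s > 0"
  shows "((\<lambda>b. gig_kernel m k b s) has_real_derivative - gig_kernel m (k + 1) b s / 2) (at b)"
  unfolding gig_kernel_def using assms
  by (auto intro!: derivative_eq_intros simp: powr_minus_diff[where s = s and k = k] field_simps)

lemma gig_integral_has_derivative:
  assumes "k > 1" "b > 0"
  shows "(gig_integral m k has_real_derivative - gig_integral m (k + 1) b / 2) (at b)"
proof -
  have "((\<lambda>x. LBINT s:{0<..}. gig_kernel m k x s) has_real_derivative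
      (LBINT s:{0<..}. - gig_kernel m (k + 1) b s / 2)) (at b)"
  proof (rule has_real_derivative_set_integral[where d = "b/2"
        and g = "\<lambda>s. s powr (-(k + 1)) * exp (- (b/4) / s) / 2"])
    show "set_integrable lborel {0<..} (gig_kernel m k x)" if "x \<in> ball b (b/2)" for x
      using that assms
      by (intro set_integrable_gig_kernel) (auto simp: dist_real_def abs_if split: if_split_asm)
    show "set_integrable lborel {0<..} (\<lambda>s. s powr (-(k + 1)) * exp (- (b/4) / s) / 2)"
      using assms by (intro set_integrable_divide set_integrable_powr_neg_mult_exp) auto
    show "\<bar>- gig_kernel m (k + 1) x s / 2\<bar> \<le> s powr (-(k + 1)) * exp (- (b/4) / s) / 2"
      if "x \<in> ball b (b/2)" "s \<in> {0<..}" for x s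
    proof -
      have "b/2 \<le> x" using that by (auto simp: dist_real_def abs_if split: if_split_asm)
      then show ?thesis using gig_kernel_abs_le[of s "b/2" x m "k + 1"] that by simp
    qed
    show "set_integrable lborel {0<..} (\<lambda>s. - gig_kernel m (k + 1) b s / 2)"
    proof -
      have "set_integrable lborel {0<..} (\<lambda>s. (-1/2) * gig_kernel m (k + 1) b s)"
        using assms by (intro set_integrable_mult_right set_integrable_gig_kernel) auto
      then show ?thesis by simp
    qed
    show "((\<lambda>x. gig_kernel m k x s) has_real_derivative - gig_kernel m (k + 1) x s / 2) (at x)"
      if "s \<in> {0<..}" for x s
      using that by (intro gig_kernel_has_derivative) simp
  qed (use assms in auto)
  moreover have "(LBINT s:{0<..}. - gig_kernel m (k + 1) b s / 2) = - gig_integral m (k + 1) b / 2"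
    using set_integral_mult_right[where a = "-1/2" and M = lborel and A = "{0<..}"
        and f = "gig_kernel m (k + 1) b"]
    unfolding gig_integral_def by simp
  ultimately show ?thesis
    unfolding gig_integral_def[abs_def] by simp
qed

lemma gig_integral_recurrence:
  assumes "k > 1" "b > 0"
  shows "b * gig_integral m (k + 2) b = 2 * k * gig_integral m (k + 1) b + m\<^sup>2 * gig_integral m k b"
proof -
  \<comment> \<open>\<open>f\<close> is the \<open>s\<close>-derivative of \<open>gig_kernel m k b\<close>, which vanishes at \<open>0\<close> and at \<open>\<infinity>\<close>.\<close>
  define f where "f s = b / 2 * gig_kernel m (k + 2) b s - k * gig_kernel m (k + 1) b s
      - m\<^sup>2 / 2 * gig_kernel m k b s" for s
  have integrable: "set_integrable lborel {0<..} (gig_kernel m j b)" if "j \<ge> k" for j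
    using that assms by (intro set_integrable_gig_kernel) auto
  have "(LBINT s=ereal 0..\<infinity>. f s) = 0 - 0"
  proof (rule interval_integral_FTC_integrable[where F = "gig_kernel m k b"])
    show "(gig_kernel m k b has_vector_derivative f s) (at s)" if "ereal 0 < ereal s" for s
      unfolding has_real_derivative_iff_has_vector_derivative[symmetric] f_def gig_kernel_def
      using that by (auto intro!: derivative_eq_intros
          simp: powr_minus_diff[where s = s and k = k] field_simps power2_eq_square)
    show "isCont f s" if "ereal 0 < ereal s" for s
      using that unfolding f_def gig_kernel_def by (auto intro!: continuous_intros)
    show "set_integrable lborel (einterval (ereal 0) \<infinity>) f"
      using integrable unfolding f_def by (auto intro!: set_integral_diff set_integrable_mult_right)
    show "((gig_kernel m k b \<circ> real_of_ereal) \<longlongrightarrow> 0) (at_right (ereal 0))"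
      unfolding ereal_tendsto_simps gig_kernel_def using assms by real_asymp
    show "((gig_kernel m k b \<circ> real_of_ereal) \<longlongrightarrow> 0) (at_left \<infinity>)"
      unfolding ereal_tendsto_simps
    proof (rule tendsto_sandwich[where f = "\<lambda>_. 0" and h = "\<lambda>s. s powr (-k)"])
      show "\<forall>\<^sub>F s in at_top. 0 \<le> gig_kernel m k b s"
        unfolding gig_kernel_def by simp
      show "\<forall>\<^sub>F s in at_top. gig_kernel m k b s \<le> s powr (-k)"
        using eventually_gt_at_top[of 0]
        by eventually_elim (use gig_kernel_abs_le[of _ 0 b m k] assms in \<open>auto simp: abs_le_iff\<close>)
      show "((\<lambda>s::real. s powr (-k)) \<longlongrightarrow> 0) at_top"
        using assms by real_asymp
    qed simp
  qed simp
  then have "(LBINT s:{0<..}. f s) = 0"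
    by (simp add: interval_integral_to_infinity_eq)
  moreover have "(LBINT s:{0<..}. f s) = b / 2 * gig_integral m (k + 2) b
      - k * gig_integral m (k + 1) b - m\<^sup>2 / 2 * gig_integral m k b"
    unfolding f_def gig_integral_def using integrable by (simp add: set_integral_diff)
  ultimately show ?thesis by (simp add: field_simps)
qed

lemma bessel_passage_product:
  assumes "s > 0"
  shows "bessel_p \<gamma> x s * passage_p \<mu> s t
       = 2 / (2 powr (\<gamma>/2) * Gamma (\<gamma>/2) * sqrt (2 * pi)) * x powr (\<gamma> - 1) * (t * exp (\<mu> * t))
         * gig_kernel \<mu> ((\<gamma> + 3) / 2) (x\<^sup>2 + t\<^sup>2) s"
proof -
  have "(2 * s) powr (\<gamma>/2) = 2 powr (\<gamma>/2) * s powr (\<gamma>/2)"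
    using assms by (simp add: powr_mult)
  moreover have "sqrt (2 * pi * s ^ 3) = sqrt (2 * pi) * s powr (3/2)"
  proof -
    have "s powr (3/2) = sqrt (s powr 3)" using assms by (simp add: powr_half_sqrt_powr)
    then show ?thesis using assms by (simp add: real_sqrt_mult)
  qed
  moreover have "s powr (- ((\<gamma> + 3) / 2)) = 1 / (s powr (\<gamma>/2) * s powr (3/2))"
    by (simp only: powr_minus add_divide_distrib powr_add inverse_eq_divide)
  moreover have "exp (- x\<^sup>2 / (2 * s)) * exp (- (t - \<mu> * s)\<^sup>2 / (2 * s))
      = exp (\<mu> * t) * exp (- ((x\<^sup>2 + t\<^sup>2) / (2 * s)) - \<mu>\<^sup>2 * s / 2)"
    unfolding exp_add[symmetric] using assms by (simp add: field_simps power2_eq_square)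
  ultimately show ?thesis
    unfolding bessel_p_def passage_p_def gig_kernel_def
    by (simp add: field_simps)
qed

lemma q_mu_eq_gig_integral:
  "q_mu \<gamma> \<mu> x t = 2 / (2 powr (\<gamma>/2) * Gamma (\<gamma>/2) * sqrt (2 * pi)) * x powr (\<gamma> - 1)
     * (t * exp (\<mu> * t)) * gig_integral \<mu> ((\<gamma> + 3) / 2) (x\<^sup>2 + t\<^sup>2)"
proof -
  have "q_mu \<gamma> \<mu> x t = (LBINT s:{0<..}. 2 / (2 powr (\<gamma>/2) * Gamma (\<gamma>/2) * sqrt (2 * pi))
      * x powr (\<gamma> - 1) * (t * exp (\<mu> * t)) * gig_kernel \<mu> ((\<gamma> + 3) / 2) (x\<^sup>2 + t\<^sup>2) s)"
    unfolding q_mu_def by (rule set_lebesgue_integral_cong) (auto simp: bessel_passage_product)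
  then show ?thesis
    unfolding gig_integral_def by simp
qed

lemma deriv_has_real_derivative_on_open:
  assumes "open S" "x \<in> S"
    and "\<And>y. y \<in> S \<Longrightarrow> (f has_real_derivative f' y) (at y)"
    and "(f' has_real_derivative f'') (at x)"
  shows "(deriv f has_real_derivative f'') (at x)"
proof (rule has_field_derivative_transform_within_open[OF assms(4) assms(1,2)])
  show "f' y = deriv f y" if "y \<in> S" for y
    using DERIV_imp_deriv[OF assms(3)[OF that]] by simp
qed

lemma radial_ansatz_has_derivative_t:
  fixes H H' H'' :: "real \<Rightarrow> real"
  assumes H': "(H has_real_derivative H' (c + t\<^sup>2)) (at (c + t\<^sup>2))"
    and H'': "(H' has_real_derivative H'' (c + t\<^sup>2)) (at (c + t\<^sup>2))"
  shows "((\<lambda>t. t * exp (\<mu> * t) * H (c + t\<^sup>2)) has_real_derivative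
            exp (\<mu> * t) * ((1 + \<mu> * t) * H (c + t\<^sup>2) + 2 * t\<^sup>2 * H' (c + t\<^sup>2))) (at t)"
    and "((\<lambda>t. exp (\<mu> * t) * ((1 + \<mu> * t) * H (c + t\<^sup>2) + 2 * t\<^sup>2 * H' (c + t\<^sup>2)))
          has_real_derivative exp (\<mu> * t) * ((2 * \<mu> + \<mu>\<^sup>2 * t) * H (c + t\<^sup>2)
            + (6 * t + 4 * \<mu> * t\<^sup>2) * H' (c + t\<^sup>2) + 4 * t ^ 3 * H'' (c + t\<^sup>2))) (at t)"
proof -
  have "((\<lambda>t. c + t\<^sup>2) has_real_derivative 2 * t) (at t)"
    by (auto intro!: derivative_eq_intros)
  note chains = DERIV_chain2[OF H' this] DERIV_chain2[OF H'' this]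
  show "((\<lambda>t. t * exp (\<mu> * t) * H (c + t\<^sup>2)) has_real_derivative
            exp (\<mu> * t) * ((1 + \<mu> * t) * H (c + t\<^sup>2) + 2 * t\<^sup>2 * H' (c + t\<^sup>2))) (at t)"
    by (rule chains derivative_eq_intros refl)+ (simp_all add: power2_eq_square algebra_simps)
  show "((\<lambda>t. exp (\<mu> * t) * ((1 + \<mu> * t) * H (c + t\<^sup>2) + 2 * t\<^sup>2 * H' (c + t\<^sup>2)))
          has_real_derivative exp (\<mu> * t) * ((2 * \<mu> + \<mu>\<^sup>2 * t) * H (c + t\<^sup>2)
            + (6 * t + 4 * \<mu> * t\<^sup>2) * H' (c + t\<^sup>2) + 4 * t ^ 3 * H'' (c + t\<^sup>2))) (at t)"
    by (rule chains derivative_eq_intros refl)+ (simp_all add: power2_eq_square power3_eq_cube algebra_simps)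
qed

lemma radial_ansatz_has_derivative_x:
  fixes H H' H'' :: "real \<Rightarrow> real"
  assumes H': "(H has_real_derivative H' (x\<^sup>2 + c)) (at (x\<^sup>2 + c))"
    and H'': "(H' has_real_derivative H'' (x\<^sup>2 + c)) (at (x\<^sup>2 + c))"
    and "x > 0"
  shows "((\<lambda>x. x powr (\<gamma> - 1) * H (x\<^sup>2 + c)) has_real_derivative
            x powr (\<gamma> - 1) * ((\<gamma> - 1) / x * H (x\<^sup>2 + c) + 2 * x * H' (x\<^sup>2 + c))) (at x)"
    and "((\<lambda>x. x powr (\<gamma> - 1) * ((\<gamma> - 1) / x * H (x\<^sup>2 + c) + 2 * x * H' (x\<^sup>2 + c)))
          has_real_derivative x powr (\<gamma> - 1) * ((\<gamma> - 1) * (\<gamma> - 2) / x\<^sup>2 * H (x\<^sup>2 + c)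
            + (4 * \<gamma> - 2) * H' (x\<^sup>2 + c) + 4 * x\<^sup>2 * H'' (x\<^sup>2 + c))) (at x)"
    and "((\<lambda>x. x powr (\<gamma> - 1) * H (x\<^sup>2 + c) / x) has_real_derivative
            x powr (\<gamma> - 1) * ((\<gamma> - 2) / x\<^sup>2 * H (x\<^sup>2 + c) + 2 * H' (x\<^sup>2 + c))) (at x)"
proof -
  have "((\<lambda>x. x\<^sup>2 + c) has_real_derivative 2 * x) (at x)"
    by (auto intro!: derivative_eq_intros)
  note chains = DERIV_chain2[OF H' this] DERIV_chain2[OF H'' this]
  have powr_pred: "x powr (\<gamma> - 2) = x powr (\<gamma> - 1) / x"
    using powr_diff[of x "\<gamma> - 1" 1] \<open>x > 0\<close> by (simp add: diff_diff_eq)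
  have "x \<noteq> 0" using \<open>x > 0\<close> by simp
  show "((\<lambda>x. x powr (\<gamma> - 1) * H (x\<^sup>2 + c)) has_real_derivative
            x powr (\<gamma> - 1) * ((\<gamma> - 1) / x * H (x\<^sup>2 + c) + 2 * x * H' (x\<^sup>2 + c))) (at x)"
    by (rule chains derivative_eq_intros refl \<open>x > 0\<close> \<open>x \<noteq> 0\<close>)+
      (use \<open>x > 0\<close> in \<open>simp_all add: powr_pred field_simps power2_eq_square\<close>)
  show "((\<lambda>x. x powr (\<gamma> - 1) * ((\<gamma> - 1) / x * H (x\<^sup>2 + c) + 2 * x * H' (x\<^sup>2 + c)))
          has_real_derivative x powr (\<gamma> - 1) * ((\<gamma> - 1) * (\<gamma> - 2) / x\<^sup>2 * H (x\<^sup>2 + c)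
            + (4 * \<gamma> - 2) * H' (x\<^sup>2 + c) + 4 * x\<^sup>2 * H'' (x\<^sup>2 + c))) (at x)"
    by (rule chains derivative_eq_intros refl \<open>x > 0\<close> \<open>x \<noteq> 0\<close>)+
      (use \<open>x > 0\<close> in \<open>simp_all add: powr_pred field_simps power2_eq_square\<close>)
  show "((\<lambda>x. x powr (\<gamma> - 1) * H (x\<^sup>2 + c) / x) has_real_derivative
            x powr (\<gamma> - 1) * ((\<gamma> - 2) / x\<^sup>2 * H (x\<^sup>2 + c) + 2 * H' (x\<^sup>2 + c))) (at x)"
    by (rule chains derivative_eq_intros refl \<open>x > 0\<close> \<open>x \<noteq> 0\<close>)+
      (use \<open>x > 0\<close> in \<open>simp_all add: powr_pred field_simps power2_eq_square\<close>)
qed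

lemma radial_ansatz_operator_t:
  fixes H H' H'' :: "real \<Rightarrow> real" and P \<mu> c t :: real
  assumes H': "\<And>\<rho>. \<rho> > 0 \<Longrightarrow> (H has_real_derivative H' \<rho>) (at \<rho>)"
    and H'': "\<And>\<rho>. \<rho> > 0 \<Longrightarrow> (H' has_real_derivative H'' \<rho>) (at \<rho>)"
    and "c > 0"
  defines "Q \<equiv> \<lambda>t. P * (t * exp (\<mu> * t) * H (c + t\<^sup>2))"
  shows "Q differentiable (at t)" and "deriv Q differentiable (at t)"
    and "2 * \<mu> * deriv Q t - deriv (deriv Q) t
      = P * t * exp (\<mu> * t) * (\<mu>\<^sup>2 * H (c + t\<^sup>2) - 6 * H' (c + t\<^sup>2) - 4 * t\<^sup>2 * H'' (c + t\<^sup>2))"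
proof -
  have pos: "c + s\<^sup>2 > 0" for s
    using \<open>c > 0\<close> by (simp add: add_pos_nonneg)
  note d = radial_ansatz_has_derivative_t[where H = H and H' = H' and H'' = H'',
      OF H'[OF pos] H''[OF pos], THEN DERIV_cmult[where c = P]]
  have deriv_Q: "deriv Q
      = (\<lambda>t. P * (exp (\<mu> * t) * ((1 + \<mu> * t) * H (c + t\<^sup>2) + 2 * t\<^sup>2 * H' (c + t\<^sup>2))))"
    unfolding Q_def using d(1) by (intro ext DERIV_imp_deriv)
  have dd: "(deriv Q has_real_derivative P * (exp (\<mu> * t) * ((2 * \<mu> + \<mu>\<^sup>2 * t) * H (c + t\<^sup>2)
      + (6 * t + 4 * \<mu> * t\<^sup>2) * H' (c + t\<^sup>2) + 4 * t ^ 3 * H'' (c + t\<^sup>2)))) (at t)"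
    unfolding deriv_Q by (rule d(2))
  show "Q differentiable (at t)"
    unfolding Q_def using d(1) real_differentiable_def by blast
  show "deriv Q differentiable (at t)"
    using dd real_differentiable_def by blast
  show "2 * \<mu> * deriv Q t - deriv (deriv Q) t
      = P * t * exp (\<mu> * t) * (\<mu>\<^sup>2 * H (c + t\<^sup>2) - 6 * H' (c + t\<^sup>2) - 4 * t\<^sup>2 * H'' (c + t\<^sup>2))"
    unfolding DERIV_imp_deriv[OF dd] unfolding deriv_Q
    by (simp add: algebra_simps power2_eq_square power3_eq_cube)
qed

lemma radial_ansatz_operator_x:
  fixes H H' H'' :: "real \<Rightarrow> real" and K \<gamma> c r :: real
  assumes H': "\<And>\<rho>. \<rho> > 0 \<Longrightarrow> (H has_real_derivative H' \<rho>) (at \<rho>)"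
    and H'': "\<And>\<rho>. \<rho> > 0 \<Longrightarrow> (H' has_real_derivative H'' \<rho>) (at \<rho>)"
    and "c \<ge> 0" and "r > 0"
  defines "R \<equiv> \<lambda>x. K * (x powr (\<gamma> - 1) * H (x\<^sup>2 + c))"
  shows "R differentiable (at r)" and "deriv R differentiable (at r)"
    and "deriv (deriv R) r - (\<gamma> - 1) * deriv (\<lambda>x. R x / x) r
      = K * r powr (\<gamma> - 1) * (2 * \<gamma> * H' (r\<^sup>2 + c) + 4 * r\<^sup>2 * H'' (r\<^sup>2 + c))"
proof -
  have pos: "x\<^sup>2 + c > 0" if "x > 0" for x
    using that \<open>c \<ge> 0\<close> by (simp add: add_pos_nonneg)
  note d = radial_ansatz_has_derivative_x[where H = H and H' = H' and H'' = H'',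
      OF H'[OF pos] H''[OF pos], THEN DERIV_cmult[where c = K]]
  have dd: "(deriv R has_real_derivative K * (r powr (\<gamma> - 1) * ((\<gamma> - 1) * (\<gamma> - 2) / r\<^sup>2 * H (r\<^sup>2 + c)
      + (4 * \<gamma> - 2) * H' (r\<^sup>2 + c) + 4 * r\<^sup>2 * H'' (r\<^sup>2 + c)))) (at r)"
    unfolding R_def
    by (rule deriv_has_real_derivative_on_open[where S = "{0<..}"]) (use \<open>r > 0\<close> d in auto)
  have "(\<lambda>x. R x / x) = (\<lambda>x. K * (x powr (\<gamma> - 1) * H (x\<^sup>2 + c) / x))"
    unfolding R_def by simp
  then have deriv_div: "deriv (\<lambda>x. R x / x) r
      = K * (r powr (\<gamma> - 1) * ((\<gamma> - 2) / r\<^sup>2 * H (r\<^sup>2 + c) + 2 * H' (r\<^sup>2 + c)))"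
    by (simp only:) (intro DERIV_imp_deriv d(3) \<open>r > 0\<close>)
  show "R differentiable (at r)"
    unfolding R_def using d(1) \<open>r > 0\<close> real_differentiable_def by blast
  show "deriv R differentiable (at r)"
    using dd real_differentiable_def by blast
  show "deriv (deriv R) r - (\<gamma> - 1) * deriv (\<lambda>x. R x / x) r
      = K * r powr (\<gamma> - 1) * (2 * \<gamma> * H' (r\<^sup>2 + c) + 4 * r\<^sup>2 * H'' (r\<^sup>2 + c))"
    unfolding DERIV_imp_deriv[OF dd] deriv_div
    using \<open>r > 0\<close> by (simp add: field_simps power2_eq_square)
qed

lemma radial_ansatz_pde:
  fixes q :: "real \<Rightarrow> real \<Rightarrow> real" and H H' H'' :: "real \<Rightarrow> real"
  assumes q: "\<And>x t. q x t = C * x powr (\<gamma> - 1) * (t * exp (\<mu> * t)) * H (x\<^sup>2 + t\<^sup>2)"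
    and H': "\<And>\<rho>. \<rho> > 0 \<Longrightarrow> (H has_real_derivative H' \<rho>) (at \<rho>)"
    and H'': "\<And>\<rho>. \<rho> > 0 \<Longrightarrow> (H' has_real_derivative H'' \<rho>) (at \<rho>)"
    and ode: "\<And>\<rho>. \<rho> > 0 \<Longrightarrow> 4 * \<rho> * H'' \<rho> + 2 * (\<gamma> + 3) * H' \<rho> = \<mu>\<^sup>2 * H \<rho>"
    and "r > 0"
  shows "(\<forall>t'>0. (\<lambda>x. q r x) differentiable (at t'))
       \<and> deriv (\<lambda>x. q r x) differentiable (at t)
       \<and> (\<forall>r'>0. (\<lambda>x. q x t) differentiable (at r'))
       \<and> deriv (\<lambda>x. q x t) differentiable (at r)
       \<and> 2 * \<mu> * deriv (\<lambda>x. q r x) t - deriv (deriv (\<lambda>x. q r x)) t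
         = deriv (deriv (\<lambda>x. q x t)) r - (\<gamma> - 1) * deriv (\<lambda>x. q x t / x) r"
proof -
  let ?P = "C * r powr (\<gamma> - 1)" and ?K = "C * (t * exp (\<mu> * t))" and ?\<rho> = "r\<^sup>2 + t\<^sup>2"
  have q_t: "(\<lambda>x. q r x) = (\<lambda>t. ?P * (t * exp (\<mu> * t) * H (r\<^sup>2 + t\<^sup>2)))"
    and q_x: "(\<lambda>x. q x t) = (\<lambda>x. ?K * (x powr (\<gamma> - 1) * H (x\<^sup>2 + t\<^sup>2)))"
    and q_x_div: "(\<lambda>x. q x t / x) = (\<lambda>x. ?K * (x powr (\<gamma> - 1) * H (x\<^sup>2 + t\<^sup>2)) / x)"
    by (simp_all add: q fun_eq_iff mult_ac)
  have "r\<^sup>2 > 0" using \<open>r > 0\<close> by simp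
  note T = radial_ansatz_operator_t[where H = H and H' = H' and H'' = H'' and c = "r\<^sup>2",
      OF H' H'' \<open>r\<^sup>2 > 0\<close>]
  note X = radial_ansatz_operator_x[where H = H and H' = H' and H'' = H'' and c = "t\<^sup>2",
      OF H' H'' zero_le_power2]
  have ode_rt: "\<mu>\<^sup>2 * H ?\<rho> - 6 * H' ?\<rho> - 4 * t\<^sup>2 * H'' ?\<rho>
      = 2 * \<gamma> * H' ?\<rho> + 4 * r\<^sup>2 * H'' ?\<rho>"
    using ode[of ?\<rho>] \<open>r\<^sup>2 > 0\<close> by (simp add: add_pos_nonneg) algebra
  have "2 * \<mu> * deriv (\<lambda>x. q r x) t - deriv (deriv (\<lambda>x. q r x)) t
      = ?P * t * exp (\<mu> * t) * (\<mu>\<^sup>2 * H ?\<rho> - 6 * H' ?\<rho> - 4 * t\<^sup>2 * H'' ?\<rho>)"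
    unfolding q_t by (rule T(3))
  also have "\<dots> = ?K * r powr (\<gamma> - 1) * (2 * \<gamma> * H' ?\<rho> + 4 * r\<^sup>2 * H'' ?\<rho>)"
    unfolding ode_rt by (simp add: mult_ac)
  also have "\<dots> = deriv (deriv (\<lambda>x. q x t)) r - (\<gamma> - 1) * deriv (\<lambda>x. q x t / x) r"
    unfolding q_x q_x_div by (rule X(3)[symmetric]) (simp_all add: \<open>r > 0\<close>)
  finally have "2 * \<mu> * deriv (\<lambda>x. q r x) t - deriv (deriv (\<lambda>x. q r x)) t
      = deriv (deriv (\<lambda>x. q x t)) r - (\<gamma> - 1) * deriv (\<lambda>x. q x t / x) r" .
  moreover have "\<forall>t'>0. (\<lambda>x. q r x) differentiable (at t')"
    unfolding q_t by (blast intro: T(1))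
  moreover have "deriv (\<lambda>x. q r x) differentiable (at t)"
    unfolding q_t by (blast intro: T(2))
  moreover have "\<forall>r'>0. (\<lambda>x. q x t) differentiable (at r')"
    unfolding q_x by (blast intro: X(1))
  moreover have "deriv (\<lambda>x. q x t) differentiable (at r)"
    unfolding q_x using \<open>r > 0\<close> by (blast intro: X(2))
  ultimately show ?thesis by blast
qed

theorem mainTheorem11:
  fixes \<gamma> \<mu> r t :: real
  assumes "\<gamma> > 0" and "\<mu> \<ge> 0" and "r > 0" and "t > 0"
  shows "(\<forall>t'>0. (\<lambda>x. q_mu \<gamma> \<mu> r x) differentiable (at t'))
       \<and> deriv (\<lambda>x. q_mu \<gamma> \<mu> r x) differentiable (at t)
       \<and> (\<forall>r'>0. (\<lambda>x. q_mu \<gamma> \<mu> x t) differentiable (at r'))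
       \<and> deriv (\<lambda>x. q_mu \<gamma> \<mu> x t) differentiable (at r)
       \<and> 2 * \<mu> * deriv (\<lambda>x. q_mu \<gamma> \<mu> r x) t
           - deriv (deriv (\<lambda>x. q_mu \<gamma> \<mu> r x)) t
         = deriv (deriv (\<lambda>x. q_mu \<gamma> \<mu> x t)) r
           - (\<gamma> - 1) * deriv (\<lambda>x. q_mu \<gamma> \<mu> x t / x) r"
proof -
  define a where "a = (\<gamma> + 3) / 2"
  have "a > 1" using \<open>\<gamma> > 0\<close> by (simp add: a_def)
  let ?H = "gig_integral \<mu> a" and ?H' = "\<lambda>\<rho>. - gig_integral \<mu> (a + 1) \<rho> / 2"
    and ?H'' = "\<lambda>\<rho>. gig_integral \<mu> (a + 2) \<rho> / 4"
  show ?thesis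
  proof (rule radial_ansatz_pde[where q = "q_mu \<gamma> \<mu>" and H = ?H and H' = ?H' and H'' = ?H''])
    show "q_mu \<gamma> \<mu> x t = 2 / (2 powr (\<gamma>/2) * Gamma (\<gamma>/2) * sqrt (2 * pi)) * x powr (\<gamma> - 1)
        * (t * exp (\<mu> * t)) * ?H (x\<^sup>2 + t\<^sup>2)" for x t
      unfolding a_def by (rule q_mu_eq_gig_integral)
    show "(?H has_real_derivative ?H' \<rho>) (at \<rho>)" if "\<rho> > 0" for \<rho>
      using gig_integral_has_derivative[OF \<open>a > 1\<close> that] .
    show "(?H' has_real_derivative ?H'' \<rho>) (at \<rho>)" if "\<rho> > 0" for \<rho>
      using gig_integral_has_derivative[of "a + 1" \<rho> \<mu>] \<open>a > 1\<close> that
      by (auto intro!: derivative_eq_intros simp: add.assoc)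
    show "4 * \<rho> * ?H'' \<rho> + 2 * (\<gamma> + 3) * ?H' \<rho> = \<mu>\<^sup>2 * ?H \<rho>" if "\<rho> > 0" for \<rho>
      using gig_integral_recurrence[OF \<open>a > 1\<close> that, of \<mu>] by (simp add: a_def)
  qed (rule \<open>r > 0\<close>)
qed

end
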